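(* If $S$ is a numerical semigroup whose set of Betti elements $\mathrm{Betti}(S)$ is totally ordered by $\le_S$ (i.e. $S$ is Betti-sorted), then $S$ is a complete intersection.
   Context: A numerical semigroup is a submonoid of $(\mathbb N,+)$ with finite complement, minimally generated by $\{n_1,\dots,n_e\}$. Write $a\le_S b$ if $b-a\in S$. Let $\varphi:\mathbb N^e\to S$, $\varphi(a)=\sum_ia_in_i$, $\mathrm Z(s)=\varphi^{-1}(s)$. $\nabla_s$ is the graph on $\mathrm Z(s)$ with distinct $x,y$ adjacent iff $x\cdot y\neq0$; $\mathrm{nc}(\nabla_s)$ is its number of connected components; $s$ is a Betti element if $\nabla_s$ is disconnected. A minimal presentation of $S$ is a minimal (by inclusion) system of generators of the congruence $\ker\varphi=\{(a,b):\varphi(a)=\varphi(b)\}$; all minimal presentations have cardinality $\sum_{b\in\mathrm{Betti}(S)}(\mathrm{nc}(\nabla_b)-1)\ge e-1$. $S$ is a complete intersection if this cardinality equals $e-1$. *)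

theory Defs
  imports Main
begin

definition numerical_semigroup :: "nat set \<Rightarrow> bool" where
  "numerical_semigroup S \<longleftrightarrow> 0 \<in> S \<and> (\<forall>a\<in>S. \<forall>b\<in>S. a + b \<in> S) \<and> finite (UNIV - S)"

definition min_gens :: "nat set \<Rightarrow> nat set" where
  "min_gens S = {n \<in> S. n \<noteq> 0 \<and> \<not> (\<exists>a\<in>S. \<exists>b\<in>S. a \<noteq> 0 \<and> b \<noteq> 0 \<and> n = a + b)}"

definition embdim :: "nat set \<Rightarrow> nat" where
  "embdim S = card (min_gens S)"

text \<open>N^e is represented as functions from the minimal generators to nat
(zero outside), i.e. a n is the coefficient of generator n.\<close>
definition facts :: "nat set \<Rightarrow> (nat \<Rightarrow> nat) set" where
  "facts S = {a. \<forall>n. n \<notin> min_gens S \<longrightarrow> a n = 0}"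

definition phi :: "nat set \<Rightarrow> (nat \<Rightarrow> nat) \<Rightarrow> nat" where
  "phi S a = (\<Sum>n\<in>min_gens S. a n * n)"

definition Z :: "nat set \<Rightarrow> nat \<Rightarrow> (nat \<Rightarrow> nat) set" where
  "Z S s = {a \<in> facts S. phi S a = s}"

definition nabla_edges :: "nat set \<Rightarrow> nat \<Rightarrow> ((nat \<Rightarrow> nat) \<times> (nat \<Rightarrow> nat)) set" where
  "nabla_edges S s = {(x, y). x \<in> Z S s \<and> y \<in> Z S s \<and> x \<noteq> y \<and>
      (\<Sum>n\<in>min_gens S. x n * y n) \<noteq> 0}"

definition nc :: "nat set \<Rightarrow> nat \<Rightarrow> nat" where
  "nc S s = card (Z S s // (Id_on (Z S s) \<union> (nabla_edges S s)\<^sup>+))"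

definition Betti :: "nat set \<Rightarrow> nat set" where
  "Betti S = {s \<in> S. nc S s > 1}"

definition le_S :: "nat set \<Rightarrow> nat \<Rightarrow> nat \<Rightarrow> bool" where
  "le_S S a b \<longleftrightarrow> a \<le> b \<and> b - a \<in> S"

definition betti_sorted :: "nat set \<Rightarrow> bool" where
  "betti_sorted S \<longleftrightarrow> (\<forall>a\<in>Betti S. \<forall>b\<in>Betti S. le_S S a b \<or> le_S S b a)"

definition kernel_cong :: "nat set \<Rightarrow> ((nat \<Rightarrow> nat) \<times> (nat \<Rightarrow> nat)) set" where
  "kernel_cong S = {(a, b). a \<in> facts S \<and> b \<in> facts S \<and> phi S a = phi S b}"

inductive_set cong_gen :: "nat set \<Rightarrow> ((nat \<Rightarrow> nat) \<times> (nat \<Rightarrow> nat)) set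
    \<Rightarrow> ((nat \<Rightarrow> nat) \<times> (nat \<Rightarrow> nat)) set"
  for S :: "nat set" and \<rho> :: "((nat \<Rightarrow> nat) \<times> (nat \<Rightarrow> nat)) set" where
  base: "p \<in> \<rho> \<Longrightarrow> p \<in> cong_gen S \<rho>"
| refl: "a \<in> facts S \<Longrightarrow> (a, a) \<in> cong_gen S \<rho>"
| sym: "(a, b) \<in> cong_gen S \<rho> \<Longrightarrow> (b, a) \<in> cong_gen S \<rho>"
| trans: "(a, b) \<in> cong_gen S \<rho> \<Longrightarrow> (b, c) \<in> cong_gen S \<rho> \<Longrightarrow> (a, c) \<in> cong_gen S \<rho>"
| add: "(a, b) \<in> cong_gen S \<rho> \<Longrightarrow> c \<in> facts S \<Longrightarrow>
         ((\<lambda>n. a n + c n), (\<lambda>n. b n + c n)) \<in> cong_gen S \<rho>"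

definition minimal_presentation :: "nat set \<Rightarrow> ((nat \<Rightarrow> nat) \<times> (nat \<Rightarrow> nat)) set \<Rightarrow> bool" where
  "minimal_presentation S \<rho> \<longleftrightarrow>
     \<rho> \<subseteq> facts S \<times> facts S \<and> cong_gen S \<rho> = kernel_cong S \<and>
     (\<forall>\<sigma>. \<sigma> \<subset> \<rho> \<longrightarrow> cong_gen S \<sigma> \<noteq> kernel_cong S)"

definition complete_intersection :: "nat set \<Rightarrow> bool" where
  "complete_intersection S \<longleftrightarrow>
     (\<forall>\<rho>. minimal_presentation S \<rho> \<longrightarrow> finite \<rho> \<and> card \<rho> = embdim S - 1)"

end

theory Submission
  imports Defs "HOL-Library.Function_Algebras" "HOL.Vector_Spaces" "HOL.Rat"
begin

text \<open>A set \<open>\<rho>\<close> of pairs generates \<open>ker \<phi>\<close> exactly when, for every \<open>s\<close>, the pairs of \<open>\<rho>\<close> of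
  degree \<open>s\<close> reconnect the graph \<open>\<nabla>\<^sub>s\<close>; minimality makes them a forest on the components of
  \<open>\<nabla>\<^sub>s\<close>, so a minimal presentation has at most \<open>nc(\<nabla>\<^sub>b) - 1\<close> pairs in each Betti degree \<open>b\<close>
  and none elsewhere. Over the rationals, the relations \<open>n\<^sub>0 e\<^sub>m = m e\<^sub>n\<^sub>0\<close> show that every
  presentation has at least \<open>e - 1\<close> pairs.

  Distinct components of \<open>\<nabla>\<^sub>t\<close> use disjoint sets of generators. If \<open>s \<le>\<^sub>S t\<close>, adding a fixed
  factorization of \<open>t - s\<close> to the factorizations of \<open>s\<close> lands in one component of \<open>\<nabla>\<^sub>t\<close>, which
  therefore meets every generator used by \<open>s\<close>; each further component needs a new generator.
  Along a chain \<open>b\<^sub>1 <\<^sub>S \<dots> <\<^sub>S b\<^sub>k\<close> of Betti elements the numbers \<open>nc(\<nabla>\<^sub>b) - 1\<close> therefore add up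
  to less than \<open>e\<close>.\<close>

section \<open>Factorizations\<close>

lemma numerical_semigroup_cofinite:
  assumes "numerical_semigroup S"
  obtains N where "\<And>x. N \<le> x \<Longrightarrow> x \<in> S"
proof -
  obtain N where "\<forall>x\<in>UNIV - S. x < N"
    using assms finite_nat_set_iff_bounded by (auto simp: numerical_semigroup_def)
  then show ?thesis using that by (meson DiffI UNIV_I not_le)
qed

lemma sum_in_numerical_semigroup:
  assumes "numerical_semigroup S" "\<And>n. n \<in> A \<Longrightarrow> f n \<in> S"
  shows "sum f A \<in> S"
  using assms(2)
  by (induction A rule: infinite_finite_induct) (use assms(1) in \<open>auto simp: numerical_semigroup_def\<close>)

lemma finite_min_gens:
  assumes "numerical_semigroup S"
  shows "finite (min_gens S)"
proof -
  obtain N where N: "\<And>x. N \<le> x \<Longrightarrow> x \<in> S"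
    using numerical_semigroup_cofinite[OF assms] by blast
  have "n \<le> 2 * N + 1" if n: "n \<in> min_gens S" for n
  proof (rule ccontr)
    assume big: "\<not> n \<le> 2 * N + 1"
    have summands: "N + 1 \<in> S" "n - (N + 1) \<in> S" using big by (auto intro: N)
    have "\<exists>a\<in>S. \<exists>b\<in>S. a \<noteq> 0 \<and> b \<noteq> 0 \<and> n = a + b"
      by (rule bexI[OF _ summands(1)], rule bexI[OF _ summands(2)]) (use big in auto)
    moreover have "\<not> (\<exists>a\<in>S. \<exists>b\<in>S. a \<noteq> 0 \<and> b \<noteq> 0 \<and> n = a + b)"
      using n by (simp add: min_gens_def)
    ultimately show False by contradiction
  qed
  then show ?thesis by (meson atMost_iff finite_atMost finite_subset subsetI)
qed

lemma phi_in_numerical_semigroup: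
  assumes "numerical_semigroup S"
  shows "phi S a \<in> S"
  unfolding phi_def
proof (rule sum_in_numerical_semigroup[OF assms])
  fix n assume "n \<in> min_gens S"
  then have "(\<Sum>_<a n. n) \<in> S"
    by (intro sum_in_numerical_semigroup[OF assms]) (simp add: min_gens_def)
  then show "a n * n \<in> S" by simp
qed

lemma phi_add: "phi S (\<lambda>n. x n + y n) = phi S x + phi S y"
  by (simp add: phi_def sum.distrib add_mult_distrib)

definition single_fact :: "nat \<Rightarrow> nat \<Rightarrow> nat \<Rightarrow> nat" where
  "single_fact m k = (\<lambda>i. if i = m then k else 0)"

lemma single_fact_in_facts: "m \<in> min_gens S \<Longrightarrow> single_fact m k \<in> facts S"
  by (auto simp: single_fact_def facts_def)

lemma phi_single_fact:
  assumes "finite (min_gens S)" "m \<in> min_gens S"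
  shows "phi S (single_fact m k) = k * m"
proof -
  have "phi S (single_fact m k) = (\<Sum>n\<in>min_gens S. if n = m then k * m else 0)"
    unfolding phi_def single_fact_def by (intro sum.cong) auto
  then show ?thesis using assms by simp
qed

lemma coeff_le_phi:
  assumes "finite (min_gens S)" "n \<in> min_gens S"
  shows "a n \<le> phi S a"
proof -
  have "a n \<le> a n * n" using assms(2) by (simp add: min_gens_def)
  also have "\<dots> \<le> phi S a" unfolding phi_def using assms by (intro member_le_sum) auto
  finally show ?thesis .
qed

lemma finite_Z:
  assumes "finite (min_gens S)"
  shows "finite (Z S s)"
proof -
  have "Z S s \<subseteq> {f. \<forall>x. (x \<in> min_gens S \<longrightarrow> f x \<in> {..s}) \<and> (x \<notin> min_gens S \<longrightarrow> f x = 0)}"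
    using coeff_le_phi[OF assms] by (auto simp: Z_def facts_def)
  then show ?thesis
    using finite_set_of_finite_funs[OF assms, of "{..s}" 0] finite_subset by fastforce
qed

lemma Z_add: "x \<in> Z S s \<Longrightarrow> y \<in> Z S t \<Longrightarrow> (\<lambda>n. x n + y n) \<in> Z S (s + t)"
  by (simp add: Z_def facts_def phi_add)

lemma Z_single_fact: "finite (min_gens S) \<Longrightarrow> n \<in> min_gens S \<Longrightarrow> single_fact n 1 \<in> Z S n"
  by (simp add: Z_def single_fact_in_facts phi_single_fact)

lemma Z_zero:
  assumes "finite (min_gens S)"
  shows "Z S 0 = {\<lambda>_. 0}"
proof -
  have "x = (\<lambda>_. 0)" if "x \<in> Z S 0" for x
    using that coeff_le_phi[OF assms, of _ x] by (fastforce simp: Z_def facts_def)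
  then show ?thesis by (auto simp: Z_def facts_def phi_def)
qed

lemma Z_support:
  assumes "x \<in> Z S s" "s \<noteq> 0"
  shows "\<exists>n. x n \<noteq> 0"
proof (rule ccontr)
  assume "\<nexists>n. x n \<noteq> 0"
  then have "x = (\<lambda>_. 0)" by auto
  then show False using assms by (simp add: Z_def phi_def)
qed

lemma Z_support_min_gens: "x \<in> Z S s \<Longrightarrow> x n \<noteq> 0 \<Longrightarrow> n \<in> min_gens S"
  by (auto simp: Z_def facts_def)

lemma Z_nonempty:
  assumes "numerical_semigroup S" "s \<in> S"
  shows "Z S s \<noteq> {}"
  using assms(2)
proof (induction s rule: less_induct)
  case (less s)
  have fin: "finite (min_gens S)" using finite_min_gens[OF assms(1)] .
  consider "s = 0" | "s \<in> min_gens S" | a b where "a \<in> S" "b \<in> S" "0 < a" "0 < b" "s = a + b"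
    using less.prems unfolding min_gens_def by blast
  then show ?case
  proof cases
    case 1
    then show ?thesis using Z_zero[OF fin] by simp
  next
    case 2
    then show ?thesis using Z_single_fact[OF fin] by blast
  next
    case 3
    then have "Z S a \<noteq> {}" "Z S b \<noteq> {}" using less.IH by auto
    then obtain x y where "x \<in> Z S a" "y \<in> Z S b" by blast
    then show ?thesis using Z_add \<open>s = a + b\<close> by blast
  qed
qed

lemma Z_remove_gen:
  assumes fin: "finite (min_gens S)" and x: "x \<in> Z S s" and n: "x n \<noteq> 0"
  defines "x' \<equiv> x(n := x n - 1)"
  shows "x' \<in> Z S (s - n)" and "0 < n" and "n \<le> s" and "x = (\<lambda>i. x' i + single_fact n 1 i)"
proof -
  have nG: "n \<in> min_gens S" using Z_support_min_gens[OF x n] .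
  then show "0 < n" by (simp add: min_gens_def)
  show split: "x = (\<lambda>i. x' i + single_fact n 1 i)"
    using n by (auto simp: x'_def single_fact_def)
  have "s = phi S x" using x by (simp add: Z_def)
  also have "phi S x = phi S x' + phi S (single_fact n 1)" by (subst split) (rule phi_add)
  finally have "s = phi S x' + n" by (simp add: phi_single_fact[OF fin nG])
  moreover have "x' \<in> facts S" using x by (simp add: x'_def Z_def facts_def)
  ultimately show "x' \<in> Z S (s - n)" and "n \<le> s" by (simp_all add: Z_def)
qed

section \<open>Equivalence closures and counting classes\<close>

definition equiv_closure :: "'a set \<Rightarrow> ('a \<times> 'a) set \<Rightarrow> ('a \<times> 'a) set" where
  "equiv_closure V E = Id_on V \<union> (E \<union> E\<inverse>)\<^sup>+"

lemma equiv_closure_refl: "a \<in> V \<Longrightarrow> (a, a) \<in> equiv_closure V E"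
  by (simp add: equiv_closure_def Id_onI)

lemma equiv_closure_edge: "(a, b) \<in> E \<Longrightarrow> (a, b) \<in> equiv_closure V E"
  by (auto simp: equiv_closure_def)

lemma equiv_closure_mono: "E \<subseteq> E' \<Longrightarrow> equiv_closure V E \<subseteq> equiv_closure V E'"
  unfolding equiv_closure_def using trancl_mono[of _ "E \<union> E\<inverse>" "E' \<union> E'\<inverse>"] by blast

lemma equiv_closure_subset: "E \<subseteq> V \<times> V \<Longrightarrow> equiv_closure V E \<subseteq> V \<times> V"
  unfolding equiv_closure_def using trancl_subset_Sigma[of "E \<union> E\<inverse>" V] by auto

lemma equiv_closure_sym: "(a, b) \<in> equiv_closure V E \<Longrightarrow> (b, a) \<in> equiv_closure V E"
  using sym_trancl[OF sym_Un_converse[of E]] by (auto simp: sym_def equiv_closure_def)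

lemma equiv_closure_trans:
  "(a, b) \<in> equiv_closure V E \<Longrightarrow> (b, c) \<in> equiv_closure V E \<Longrightarrow> (a, c) \<in> equiv_closure V E"
  by (auto simp: equiv_closure_def dest: trancl_trans)

lemma equiv_equiv_closure:
  assumes "E \<subseteq> V \<times> V"
  shows "equiv V (equiv_closure V E)"
proof (rule equivI)
  show "equiv_closure V E \<subseteq> V \<times> V" by (rule equiv_closure_subset[OF assms])
  show "refl_on V (equiv_closure V E)" by (simp add: refl_on_def equiv_closure_refl)
  show "sym (equiv_closure V E)" by (auto simp: sym_def intro: equiv_closure_sym)
  show "trans (equiv_closure V E)" by (auto simp: trans_def intro: equiv_closure_trans)
qed

lemma equiv_closure_least:
  assumes "Id_on V \<subseteq> R" "E \<subseteq> R" "sym R" "trans R"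
  shows "equiv_closure V E \<subseteq> R"
proof -
  have "E \<union> E\<inverse> \<subseteq> R" using assms(2,3) by (auto simp: sym_def)
  then have "(E \<union> E\<inverse>)\<^sup>+ \<subseteq> R\<^sup>+" by (auto elim: trancl_mono)
  then show ?thesis using assms(1,4) by (simp add: equiv_closure_def)
qed

lemma equiv_closure_insert_absorb:
  assumes "E \<subseteq> V \<times> V" "(u, v) \<in> equiv_closure V E"
  shows "equiv_closure V (insert (u, v) E) = equiv_closure V E"
proof
  have "equiv V (equiv_closure V E)" using equiv_equiv_closure[OF assms(1)] .
  then show "equiv_closure V (insert (u, v) E) \<subseteq> equiv_closure V E"
    using assms(2) by (intro equiv_closure_least) (auto elim: equivE refl_onD intro: equiv_closure_edge)
qed (rule equiv_closure_mono, blast)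

lemma card_quotient_le_1:
  assumes "equiv A r" "A \<times> A \<subseteq> r"
  shows "card (A // r) \<le> 1"
proof -
  have "A // r \<subseteq> {A}"
    using assms by (auto simp: quotient_def equiv_def refl_on_def)
  then show ?thesis using card_mono[of "{A}"] by fastforce
qed

text \<open>The classes of the larger closure are the images of those of the smaller one, and the
  classes of \<open>u\<close> and \<open>v\<close> have the same image.\<close>

lemma card_quotient_insert_less:
  assumes fin: "finite V" and E: "E \<subseteq> V \<times> V" and uv: "u \<in> V" "v \<in> V" "(u, v) \<notin> equiv_closure V E"
  shows "card (V // equiv_closure V (insert (u, v) E)) < card (V // equiv_closure V E)"
proof -
  let ?R = "equiv_closure V E" and ?R' = "equiv_closure V (insert (u, v) E)"
  have eqR: "equiv V ?R" by (rule equiv_equiv_closure[OF E])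
  have eqR': "equiv V ?R'" using E uv by (intro equiv_equiv_closure) auto
  have sub: "?R \<subseteq> ?R'" by (rule equiv_closure_mono) blast
  define h where "h X = ?R' `` X" for X
  have h_class: "h (?R `` {x}) = ?R' `` {x}" if "x \<in> V" for x
    using that sub eqR eqR' unfolding h_def by (auto elim!: equivE refl_onD dest: transD)
  have "h ` (V // ?R) = V // ?R'"
    by (auto simp: quotient_def h_class image_iff)
  moreover have "\<not> inj_on h (V // ?R)"
  proof
    assume inj: "inj_on h (V // ?R)"
    have "h (?R `` {u}) = h (?R `` {v})"
      using uv equiv_class_eq[OF eqR' equiv_closure_edge[of u v]] by (simp add: h_class)
    moreover have "?R `` {u} \<in> V // ?R" "?R `` {v} \<in> V // ?R" using uv by (auto intro: quotientI)
    ultimately have "?R `` {u} = ?R `` {v}" by (rule inj_onD[OF inj])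
    then show False using uv eq_equiv_class_iff[OF eqR] by blast
  qed
  moreover have "finite (V // ?R)" using finite_quotient[OF fin] equiv_closure_subset[OF E] by blast
  ultimately show ?thesis
    using card_image_le[of "V // ?R" h] eq_card_imp_inj_on[of "V // ?R" h] by fastforce
qed

text \<open>The classical forest count: each edge of \<open>F\<close> that cannot be removed without changing
  the closure joins two different classes.\<close>

lemma card_quotient_essential_edges:
  assumes "finite V" "finite F" "B \<union> F \<subseteq> V \<times> V"
    and "\<And>f. f \<in> F \<Longrightarrow> equiv_closure V (B \<union> (F - {f})) \<noteq> equiv_closure V (B \<union> F)"
  shows "card F + card (V // equiv_closure V (B \<union> F)) \<le> card (V // equiv_closure V B)"
  using assms(2-)
proof (induction F arbitrary: B rule: finite_induct)
  case empty
  then show ?case by simp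
next
  case (insert f F)
  obtain u v where f: "f = (u, v)" by fastforce
  have uv: "u \<in> V" "v \<in> V" using insert.prems(1) f by auto
  have "card F + card (V // equiv_closure V (insert f B \<union> F)) \<le> card (V // equiv_closure V (insert f B))"
  proof (rule insert.IH)
    show "insert f B \<union> F \<subseteq> V \<times> V" using insert.prems(1) by auto
    fix g assume "g \<in> F"
    then have "B \<union> (insert f F - {g}) = insert f B \<union> (F - {g})" using insert.hyps(2) by auto
    then show "equiv_closure V (insert f B \<union> (F - {g})) \<noteq> equiv_closure V (insert f B \<union> F)"
      using insert.prems(2)[of g] \<open>g \<in> F\<close> by simp
  qed
  moreover have "(u, v) \<notin> equiv_closure V B"
  proof
    assume "(u, v) \<in> equiv_closure V B"
    then have "(u, v) \<in> equiv_closure V (B \<union> F)" using equiv_closure_mono[of B "B \<union> F"] by blast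
    then have "equiv_closure V (insert (u, v) (B \<union> F)) = equiv_closure V (B \<union> F)"
      using insert.prems(1) by (intro equiv_closure_insert_absorb) auto
    then show False using insert.prems(2)[of f] insert.hyps(2) f by (simp add: insert_Diff_if)
  qed
  then have "card (V // equiv_closure V (insert f B)) < card (V // equiv_closure V B)"
    using card_quotient_insert_less[OF assms(1) _ uv] insert.prems(1) f by blast
  ultimately show ?case using insert.hyps by simp
qed

section \<open>Presentations and the graphs \<open>\<nabla>\<^sub>s\<close>\<close>

type_synonym fact_rel = "((nat \<Rightarrow> nat) \<times> (nat \<Rightarrow> nat)) set"

definition pairs_at :: "nat set \<Rightarrow> fact_rel \<Rightarrow> nat \<Rightarrow> fact_rel" where
  "pairs_at S \<rho> s = {p \<in> \<rho>. phi S (fst p) = s}"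

abbreviation fibre_closure :: "nat set \<Rightarrow> fact_rel \<Rightarrow> nat \<Rightarrow> fact_rel" where
  "fibre_closure S \<rho> s \<equiv> equiv_closure (Z S s) (nabla_edges S s \<union> pairs_at S \<rho> s)"

abbreviation nabla_closure :: "nat set \<Rightarrow> nat \<Rightarrow> fact_rel" where
  "nabla_closure S s \<equiv> equiv_closure (Z S s) (nabla_edges S s)"

abbreviation nabla_components :: "nat set \<Rightarrow> nat \<Rightarrow> (nat \<Rightarrow> nat) set set" where
  "nabla_components S s \<equiv> Z S s // nabla_closure S s"

definition fibres_connected :: "nat set \<Rightarrow> fact_rel \<Rightarrow> bool" where
  "fibres_connected S \<rho> \<longleftrightarrow> (\<forall>s. Z S s \<times> Z S s \<subseteq> fibre_closure S \<rho> s)"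

lemma nabla_edges_subset: "nabla_edges S s \<subseteq> Z S s \<times> Z S s"
  by (auto simp: nabla_edges_def)

lemma pairs_at_subset: "\<rho> \<subseteq> kernel_cong S \<Longrightarrow> pairs_at S \<rho> s \<subseteq> Z S s \<times> Z S s"
  by (auto simp: pairs_at_def kernel_cong_def Z_def)

lemma fibre_closure_subset: "\<rho> \<subseteq> kernel_cong S \<Longrightarrow> fibre_closure S \<rho> s \<subseteq> Z S s \<times> Z S s"
  using nabla_edges_subset pairs_at_subset by (intro equiv_closure_subset) blast

lemma nc_eq_card_quotient: "nc S s = card (nabla_components S s)"
proof -
  have "(nabla_edges S s)\<inverse> = nabla_edges S s"
    by (auto simp: nabla_edges_def mult.commute)
  then show ?thesis by (simp add: nc_def equiv_closure_def)
qed

lemma nabla_edge_common_gen: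
  assumes "(u, v) \<in> nabla_edges S s"
  obtains n where "u n \<noteq> 0" "v n \<noteq> 0"
proof -
  have "(\<Sum>n\<in>min_gens S. u n * v n) \<noteq> 0" using assms by (simp add: nabla_edges_def)
  then obtain n where "u n * v n \<noteq> 0" by (rule sum.not_neutral_contains_not_neutral)
  then show ?thesis by (intro that[of n]) simp_all
qed

lemma nabla_connected_if_common_gen:
  assumes fin: "finite (min_gens S)" and xy: "x \<in> Z S s" "y \<in> Z S s" and n: "x n \<noteq> 0" "y n \<noteq> 0"
  shows "(x, y) \<in> nabla_closure S s"
proof (cases "x = y")
  case True
  then show ?thesis using xy by (simp add: equiv_closure_refl)
next
  case False
  have "n \<in> min_gens S" using Z_support_min_gens[OF xy(1) n(1)] .
  then have "(\<Sum>m\<in>min_gens S. x m * y m) \<noteq> 0" using fin n by auto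
  then show ?thesis using xy False by (intro equiv_closure_edge) (simp add: nabla_edges_def)
qed

lemma cong_gen_subset_kernel:
  assumes "\<rho> \<subseteq> kernel_cong S"
  shows "cong_gen S \<rho> \<subseteq> kernel_cong S"
proof
  fix p assume "p \<in> cong_gen S \<rho>"
  then show "p \<in> kernel_cong S"
    by (induction rule: cong_gen.induct)
      (use assms in \<open>auto simp: kernel_cong_def facts_def phi_add\<close>)
qed

lemma sym_cong_gen: "sym (cong_gen S \<rho>)"
  by (auto simp: sym_def intro: cong_gen.sym)

lemma trans_cong_gen: "trans (cong_gen S \<rho>)"
  by (auto simp: trans_def intro: cong_gen.trans)

text \<open>The \<open>add\<close> rule of \<open>cong_gen\<close> is harmless: adding a nonzero common summand turns any
  pair into an edge of \<open>\<nabla>\<close>.\<close>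

lemma cong_gen_in_fibre_closure:
  assumes fin: "finite (min_gens S)" and \<rho>: "\<rho> \<subseteq> kernel_cong S"
  shows "p \<in> cong_gen S \<rho> \<Longrightarrow> p \<in> fibre_closure S \<rho> (phi S (fst p))"
proof (induction rule: cong_gen.induct)
  case (base p)
  then show ?case by (cases p) (auto intro: equiv_closure_edge simp: pairs_at_def)
next
  case (refl a)
  then show ?case by (simp add: equiv_closure_refl Z_def)
next
  case (sym a b)
  then have "phi S b = phi S a" using fibre_closure_subset[OF \<rho>] by (force simp: Z_def)
  then show ?case using sym.IH by (simp add: equiv_closure_sym)
next
  case (trans a b c)
  then have "phi S b = phi S a" using fibre_closure_subset[OF \<rho>] by (force simp: Z_def)
  then show ?case using trans.IH by (auto intro: equiv_closure_trans)
next
  case (add a b c)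
  have ab: "a \<in> Z S (phi S a)" "b \<in> Z S (phi S a)"
    using add.IH fibre_closure_subset[OF \<rho>] by auto
  show ?case
  proof (cases "c = (\<lambda>_. 0)")
    case True
    then show ?thesis using add.IH by simp
  next
    case False
    then obtain n where "c n \<noteq> 0" by auto
    moreover have "c \<in> Z S (phi S c)" using add.hyps(2) by (simp add: Z_def)
    ultimately have "((\<lambda>n. a n + c n), (\<lambda>n. b n + c n)) \<in> nabla_closure S (phi S a + phi S c)"
      using ab by (intro nabla_connected_if_common_gen[OF fin, where n = n]) (auto intro: Z_add)
    then have "((\<lambda>n. a n + c n), (\<lambda>n. b n + c n)) \<in> fibre_closure S \<rho> (phi S a + phi S c)"
      using equiv_closure_mono[OF Un_upper1] by blast
    then show ?thesis by (simp add: phi_add)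
  qed
qed

text \<open>An edge of \<open>\<nabla>\<^sub>s\<close> is a common generator added to a pair of smaller degree, hence the
  induction on \<open>s\<close>.\<close>

lemma fibres_connected_imp_cong_gen:
  assumes fin: "finite (min_gens S)" and conn: "fibres_connected S \<rho>"
  shows "x \<in> Z S s \<Longrightarrow> y \<in> Z S s \<Longrightarrow> (x, y) \<in> cong_gen S \<rho>"
proof (induction s arbitrary: x y rule: less_induct)
  case (less s)
  have "nabla_edges S s \<subseteq> cong_gen S \<rho>"
  proof
    fix p assume p: "p \<in> nabla_edges S s"
    then obtain u v where uv: "p = (u, v)" "u \<in> Z S s" "v \<in> Z S s" by (auto simp: nabla_edges_def)
    obtain n where n: "u n \<noteq> 0" "v n \<noteq> 0" using p uv(1) by (auto elim: nabla_edge_common_gen)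
    note u = Z_remove_gen[OF fin uv(2) n(1)] and v = Z_remove_gen[OF fin uv(3) n(2)]
    have "s - n < s" using u(2,3) by simp
    then have "(u(n := u n - 1), v(n := v n - 1)) \<in> cong_gen S \<rho>"
      using u(1) v(1) by (rule less.IH)
    from cong_gen.add[OF this single_fact_in_facts[OF Z_support_min_gens[OF uv(2) n(1)], of 1]]
    have "(u, v) \<in> cong_gen S \<rho>" by (simp only: u(4)[symmetric] v(4)[symmetric])
    then show "p \<in> cong_gen S \<rho>" using uv(1) by simp
  qed
  moreover have "pairs_at S \<rho> s \<subseteq> cong_gen S \<rho>" by (auto simp: pairs_at_def intro: cong_gen.base)
  moreover have "Id_on (Z S s) \<subseteq> cong_gen S \<rho>" by (auto simp: Z_def intro: cong_gen.refl)
  ultimately have "fibre_closure S \<rho> s \<subseteq> cong_gen S \<rho>"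
    by (intro equiv_closure_least sym_cong_gen trans_cong_gen) auto
  then show ?case using conn less.prems by (auto simp: fibres_connected_def)
qed

theorem cong_gen_eq_kernel_iff:
  assumes fin: "finite (min_gens S)" and \<rho>: "\<rho> \<subseteq> kernel_cong S"
  shows "cong_gen S \<rho> = kernel_cong S \<longleftrightarrow> fibres_connected S \<rho>"
proof
  assume eq: "cong_gen S \<rho> = kernel_cong S"
  show "fibres_connected S \<rho>"
    unfolding fibres_connected_def
  proof (intro allI subsetI, clarify)
    fix s x y assume xy: "x \<in> Z S s" "y \<in> Z S s"
    then have "(x, y) \<in> cong_gen S \<rho>" using eq by (auto simp: kernel_cong_def Z_def)
    then show "(x, y) \<in> fibre_closure S \<rho> s"
      using cong_gen_in_fibre_closure[OF fin \<rho>] xy(1) by (force simp: Z_def)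
  qed
next
  assume "fibres_connected S \<rho>"
  then have "kernel_cong S \<subseteq> cong_gen S \<rho>"
    using fibres_connected_imp_cong_gen[OF fin] by (fastforce simp: kernel_cong_def Z_def)
  then show "cong_gen S \<rho> = kernel_cong S" using cong_gen_subset_kernel[OF \<rho>] by blast
qed

section \<open>Minimal presentations live in Betti degrees\<close>

lemma minimal_presentation_subset_kernel:
  assumes "minimal_presentation S \<rho>"
  shows "\<rho> \<subseteq> kernel_cong S"
proof
  fix p assume "p \<in> \<rho>"
  then have "p \<in> cong_gen S \<rho>" by (rule cong_gen.base)
  then show "p \<in> kernel_cong S" using assms by (simp add: minimal_presentation_def)
qed

lemma minimal_presentation_essential:
  assumes fin: "finite (min_gens S)" and mp: "minimal_presentation S \<rho>" and p: "p \<in> pairs_at S \<rho> s"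
  shows "equiv_closure (Z S s) (nabla_edges S s \<union> (pairs_at S \<rho> s - {p})) \<noteq> fibre_closure S \<rho> s"
proof
  assume eq: "equiv_closure (Z S s) (nabla_edges S s \<union> (pairs_at S \<rho> s - {p})) = fibre_closure S \<rho> s"
  have \<rho>: "\<rho> \<subseteq> kernel_cong S" by (rule minimal_presentation_subset_kernel[OF mp])
  have "pairs_at S (\<rho> - {p}) t = (if t = s then pairs_at S \<rho> s - {p} else pairs_at S \<rho> t)" for t
    using p by (auto simp: pairs_at_def)
  then have "fibre_closure S (\<rho> - {p}) t = fibre_closure S \<rho> t" for t
    using eq by simp
  moreover have "fibres_connected S \<rho>"
    using mp cong_gen_eq_kernel_iff[OF fin \<rho>] by (simp add: minimal_presentation_def)
  ultimately have "fibres_connected S (\<rho> - {p})" by (simp add: fibres_connected_def)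
  then have "cong_gen S (\<rho> - {p}) = kernel_cong S"
    using \<rho> by (subst cong_gen_eq_kernel_iff[OF fin]) auto
  moreover have "\<rho> - {p} \<subset> \<rho>" using p by (auto simp: pairs_at_def)
  ultimately show False using mp by (simp add: minimal_presentation_def)
qed

lemma card_pairs_at_le:
  assumes fin: "finite (min_gens S)" and mp: "minimal_presentation S \<rho>"
  shows "finite (pairs_at S \<rho> s)" and "card (pairs_at S \<rho> s) \<le> nc S s - 1"
proof -
  let ?V = "Z S s" and ?F = "pairs_at S \<rho> s"
  have finV: "finite ?V" by (rule finite_Z[OF fin])
  have F: "?F \<subseteq> ?V \<times> ?V" by (rule pairs_at_subset[OF minimal_presentation_subset_kernel[OF mp]])
  show finF: "finite ?F" using finV F finite_subset by blast
  have "card ?F + card (?V // fibre_closure S \<rho> s) \<le> nc S s"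
    unfolding nc_eq_card_quotient
    using finV finF F nabla_edges_subset minimal_presentation_essential[OF fin mp]
    by (intro card_quotient_essential_edges) auto
  moreover have "?V \<noteq> {} \<Longrightarrow> 0 < card (?V // fibre_closure S \<rho> s)"
    using finV F nabla_edges_subset
    by (auto simp: card_gt_0_iff intro!: finite_quotient equiv_closure_subset)
  moreover have "?V = {} \<Longrightarrow> ?F = {}" using F by blast
  ultimately show "card ?F \<le> nc S s - 1" by fastforce
qed

lemma Betti_if_pairs_at:
  assumes ns: "numerical_semigroup S" and mp: "minimal_presentation S \<rho>"
    and ne: "pairs_at S \<rho> s \<noteq> {}"
  shows "s \<in> Betti S"
proof -
  have fin: "finite (min_gens S)" by (rule finite_min_gens[OF ns])
  obtain x y where "(x, y) \<in> pairs_at S \<rho> s" using ne by auto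
  then have "x \<in> Z S s"
    using pairs_at_subset[OF minimal_presentation_subset_kernel[OF mp]] by blast
  then have "s \<in> S" using phi_in_numerical_semigroup[OF ns] by (auto simp: Z_def)
  moreover have "0 < card (pairs_at S \<rho> s)"
    using ne card_pairs_at_le(1)[OF fin mp] by (simp add: card_gt_0_iff)
  ultimately show ?thesis using card_pairs_at_le(2)[OF fin mp, of s] by (simp add: Betti_def)
qed

lemma Betti_disconnected:
  assumes fin: "finite (min_gens S)" and b: "b \<in> Betti S"
  obtains x y where "x \<in> Z S b" "y \<in> Z S b" "(x, y) \<notin> nabla_closure S b"
proof (rule ccontr)
  assume "\<not> thesis"
  with that have "Z S b \<times> Z S b \<subseteq> nabla_closure S b" by blast
  then have "nc S b \<le> 1"
    unfolding nc_eq_card_quotient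
    by (intro card_quotient_le_1 equiv_equiv_closure nabla_edges_subset)
  then show False using b by (simp add: Betti_def)
qed

lemma Betti_pos:
  assumes "finite (min_gens S)" "b \<in> Betti S"
  shows "0 < b"
  using Betti_disconnected[OF assms] Z_zero[OF assms(1)] equiv_closure_refl
  by (metis gr0I singletonD)

lemma nabla_connected_if_remainder:
  assumes ns: "numerical_semigroup S" and xy: "x \<in> Z S b" "y \<in> Z S b" "x n \<noteq> 0" "y m \<noteq> 0"
    and rest: "n + m \<le> b" "b - n - m \<in> S"
  shows "(x, y) \<in> nabla_closure S b"
proof -
  have fin: "finite (min_gens S)" by (rule finite_min_gens[OF ns])
  obtain z where z: "z \<in> Z S (b - n - m)" using Z_nonempty[OF ns rest(2)] by blast
  have n: "n \<in> min_gens S" and m: "m \<in> min_gens S" using Z_support_min_gens xy by blast+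
  define w where "w = (\<lambda>i. z i + single_fact n 1 i + single_fact m 1 i)"
  have "w \<in> Z S (b - n - m + n + m)"
    unfolding w_def by (intro Z_add z Z_single_fact fin n m)
  then have w: "w \<in> Z S b" using rest(1) by simp
  have "(x, w) \<in> nabla_closure S b"
    using xy(1,3) w by (intro nabla_connected_if_common_gen[OF fin, where n = n]) (auto simp: w_def single_fact_def)
  moreover have "(w, y) \<in> nabla_closure S b"
    using xy(2,4) w by (intro nabla_connected_if_common_gen[OF fin, where n = m]) (auto simp: w_def single_fact_def)
  ultimately show ?thesis by (rule equiv_closure_trans)
qed

lemma finite_Betti:
  assumes ns: "numerical_semigroup S"
  shows "finite (Betti S)"
proof -
  have fin: "finite (min_gens S)" by (rule finite_min_gens[OF ns])
  obtain N where N: "\<And>x. N \<le> x \<Longrightarrow> x \<in> S" using numerical_semigroup_cofinite[OF ns] by blast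
  have "b < N + 2 * Max (min_gens S)" if b: "b \<in> Betti S" for b
  proof -
    obtain x y where xy: "x \<in> Z S b" "y \<in> Z S b"
      and disc: "(x, y) \<notin> nabla_closure S b"
      using Betti_disconnected[OF fin b] by blast
    obtain n m where nm: "x n \<noteq> 0" "y m \<noteq> 0"
      using Z_support[OF xy(1)] Z_support[OF xy(2)] Betti_pos[OF fin b] by blast
    have "n \<le> Max (min_gens S)" "m \<le> Max (min_gens S)"
      using fin Z_support_min_gens xy nm by auto
    moreover have "b < N + n + m"
    proof (rule ccontr)
      assume "\<not> b < N + n + m"
      then have "(x, y) \<in> nabla_closure S b"
        by (intro nabla_connected_if_remainder[OF ns xy nm] N) auto
      with disc show False ..
    qed
    ultimately show ?thesis by linarith
  qed
  then show ?thesis by (meson finite_lessThan finite_subset lessThan_iff subsetI)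
qed

lemma minimal_presentation_card_le:
  assumes ns: "numerical_semigroup S" and mp: "minimal_presentation S \<rho>"
  shows "finite \<rho>" and "card \<rho> \<le> (\<Sum>b\<in>Betti S. nc S b - 1)"
proof -
  have fin: "finite (min_gens S)" by (rule finite_min_gens[OF ns])
  have "p \<in> (\<Union>b\<in>Betti S. pairs_at S \<rho> b)" if "p \<in> \<rho>" for p
  proof -
    have "p \<in> pairs_at S \<rho> (phi S (fst p))" using that by (simp add: pairs_at_def)
    then show ?thesis using Betti_if_pairs_at[OF ns mp, of "phi S (fst p)"] by blast
  qed
  then have \<rho>: "\<rho> = (\<Union>b\<in>Betti S. pairs_at S \<rho> b)" by (auto simp: pairs_at_def)
  show "finite \<rho>"
    by (subst \<rho>) (intro finite_UN_I finite_Betti[OF ns] card_pairs_at_le(1)[OF fin mp])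
  have "card \<rho> \<le> (\<Sum>b\<in>Betti S. card (pairs_at S \<rho> b))"
    by (subst \<rho>) (rule card_UN_le[OF finite_Betti[OF ns]])
  also have "\<dots> \<le> (\<Sum>b\<in>Betti S. nc S b - 1)"
    by (intro sum_mono card_pairs_at_le(2)[OF fin mp])
  finally show "card \<rho> \<le> (\<Sum>b\<in>Betti S. nc S b - 1)" .
qed

section \<open>The number of components along a chain of Betti elements\<close>

definition used_gens :: "nat set \<Rightarrow> nat \<Rightarrow> nat set" where
  "used_gens S s = {n. \<exists>x\<in>Z S s. x n \<noteq> 0}"

lemma used_gens_subset: "used_gens S s \<subseteq> min_gens S"
  by (auto simp: used_gens_def intro: Z_support_min_gens)

text \<open>Distinct components of \<open>\<nabla>\<^sub>t\<close> get distinct generators, because factorizations sharing a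
  generator are adjacent.\<close>

definition component_gen :: "(nat \<Rightarrow> nat) set \<Rightarrow> nat" where
  "component_gen C = (SOME n. \<exists>x\<in>C. x n \<noteq> 0)"

lemma component_gen:
  assumes "0 < t" and C: "C \<in> nabla_components S t"
  obtains x where "x \<in> C" "x \<in> Z S t" "x (component_gen C) \<noteq> 0"
proof -
  have eqv: "equiv (Z S t) (nabla_closure S t)"
    by (rule equiv_equiv_closure[OF nabla_edges_subset])
  obtain x where x: "x \<in> C" using in_quotient_imp_non_empty[OF eqv C] by blast
  moreover have xZ: "x \<in> Z S t" using x in_quotient_imp_subset[OF eqv C] by blast
  moreover obtain n where "x n \<noteq> 0" using Z_support[OF xZ] assms(1) by blast
  ultimately have "\<exists>n. \<exists>x\<in>C. x n \<noteq> 0" by blast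
  then have "\<exists>x\<in>C. x (component_gen C) \<noteq> 0"
    unfolding component_gen_def by (rule someI_ex)
  then show ?thesis using that in_quotient_imp_subset[OF eqv C] by blast
qed

lemma component_gen_eqD:
  assumes fin: "finite (min_gens S)" and "0 < t"
    and C: "C \<in> nabla_components S t"
    and D: "D \<in> nabla_components S t"
    and y: "y \<in> D" "y (component_gen C) \<noteq> 0"
  shows "C = D"
proof -
  have eqv: "equiv (Z S t) (nabla_closure S t)"
    by (rule equiv_equiv_closure[OF nabla_edges_subset])
  obtain x where x: "x \<in> C" "x \<in> Z S t" "x (component_gen C) \<noteq> 0"
    using component_gen[OF \<open>0 < t\<close> C] by blast
  have "y \<in> Z S t" using y(1) in_quotient_imp_subset[OF eqv D] by blast
  then have "(x, y) \<in> nabla_closure S t"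
    using x y by (intro nabla_connected_if_common_gen[OF fin]) auto
  then show ?thesis using quotient_eqI[OF eqv C D x(1) y(1)] by blast
qed

lemma inj_on_component_gen:
  assumes "finite (min_gens S)" "0 < t"
  shows "inj_on component_gen (nabla_components S t)"
proof (rule inj_onI)
  fix C D assume C: "C \<in> nabla_components S t"
    and D: "D \<in> nabla_components S t"
    and eq: "component_gen C = component_gen D"
  obtain y where "y \<in> D" "y (component_gen D) \<noteq> 0" using component_gen[OF assms(2) D] by blast
  then show "C = D" using component_gen_eqD[OF assms C D] eq by simp
qed

lemma component_gen_in_used_gens:
  assumes "0 < t" "C \<in> nabla_components S t"
  shows "component_gen C \<in> used_gens S t"
  using component_gen[OF assms] by (auto simp: used_gens_def)

lemma nc_le_card_used_gens:
  assumes fin: "finite (min_gens S)" and "0 < t"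
  shows "nc S t \<le> card (used_gens S t)"
  unfolding nc_eq_card_quotient
  using component_gen_in_used_gens[OF assms(2)]
    finite_subset[OF used_gens_subset fin]
  by (intro card_inj_on_le[OF inj_on_component_gen[OF assms]]) auto

lemma used_gens_mono:
  assumes ns: "numerical_semigroup S" and "s \<le> t" "t - s \<in> S"
  shows "used_gens S s \<subseteq> used_gens S t"
proof
  obtain w where w: "w \<in> Z S (t - s)" using Z_nonempty[OF ns \<open>t - s \<in> S\<close>] by blast
  fix n assume "n \<in> used_gens S s"
  then obtain z where z: "z \<in> Z S s" "z n \<noteq> 0" by (auto simp: used_gens_def)
  have "(\<lambda>i. z i + w i) \<in> Z S t" using Z_add[OF z(1) w] \<open>s \<le> t\<close> by simp
  then show "n \<in> used_gens S t" using z(2) by (auto simp: used_gens_def)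
qed

lemma component_gen_notin_used_gens:
  assumes fin: "finite (min_gens S)" and "s < t"
    and w: "w \<in> Z S (t - s)" "w k \<noteq> 0" and z0: "z0 \<in> Z S s"
    and C: "C \<in> nabla_components S t" "C \<noteq> nabla_closure S t `` {\<lambda>i. z0 i + w i}"
  shows "component_gen C \<notin> used_gens S s"
proof
  let ?C0 = "nabla_closure S t `` {\<lambda>i. z0 i + w i}"
  have shift: "(\<lambda>i. z i + w i) \<in> Z S t" if "z \<in> Z S s" for z
    using Z_add[OF that w(1)] \<open>s < t\<close> by simp
  assume "component_gen C \<in> used_gens S s"
  then obtain z where z: "z \<in> Z S s" "z (component_gen C) \<noteq> 0" by (auto simp: used_gens_def)
  have "((\<lambda>i. z0 i + w i), (\<lambda>i. z i + w i)) \<in> nabla_closure S t"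
    using shift z z0 w(2) by (intro nabla_connected_if_common_gen[OF fin, where n = k]) auto
  then have "(\<lambda>i. z i + w i) \<in> ?C0" by simp
  moreover have "?C0 \<in> nabla_components S t" by (rule quotientI[OF shift[OF z0]])
  moreover have "(\<lambda>i. z i + w i) (component_gen C) \<noteq> 0" using z(2) by simp
  ultimately have "C = ?C0" using \<open>s < t\<close> by (intro component_gen_eqD[OF fin _ C(1)]) auto
  with C(2) show False ..
qed

lemma nc_le_Suc_card_new_gens:
  assumes ns: "numerical_semigroup S" and "Z S s \<noteq> {}" "s < t" "t - s \<in> S"
  shows "nc S t \<le> 1 + card (used_gens S t - used_gens S s)"
proof -
  have fin: "finite (min_gens S)" by (rule finite_min_gens[OF ns])
  have t: "0 < t" using \<open>s < t\<close> by simp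
  obtain z0 where z0: "z0 \<in> Z S s" using \<open>Z S s \<noteq> {}\<close> by blast
  obtain w where w: "w \<in> Z S (t - s)" using Z_nonempty[OF ns \<open>t - s \<in> S\<close>] by blast
  obtain k where k: "w k \<noteq> 0" using Z_support[OF w] \<open>s < t\<close> by auto
  define C0 where "C0 = nabla_closure S t `` {\<lambda>i. z0 i + w i}"
  have C0: "C0 \<in> nabla_components S t"
    unfolding C0_def using Z_add[OF z0 w] \<open>s < t\<close> by (intro quotientI) simp
  have "component_gen ` (nabla_components S t - {C0}) \<subseteq> used_gens S t - used_gens S s"
    using component_gen_in_used_gens[OF t] component_gen_notin_used_gens[OF fin \<open>s < t\<close> w k z0]
    unfolding C0_def by blast
  then have "card (nabla_components S t - {C0}) \<le> card (used_gens S t - used_gens S s)"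
    using inj_on_component_gen[OF fin t] finite_subset[OF _ fin] used_gens_subset
    by (intro card_inj_on_le) (auto intro: inj_on_subset)
  moreover have "finite (nabla_components S t)"
    using finite_quotient[OF finite_Z[OF fin]] equiv_closure_subset[OF nabla_edges_subset] by blast
  then have "card (nabla_components S t) = 1 + card (nabla_components S t - {C0})"
    using card_Suc_Diff1[OF _ C0] by simp
  ultimately show ?thesis by (simp add: nc_eq_card_quotient)
qed

lemma sum_minus_1_less_card_chain:
  fixes B :: "'b::linorder set" and U :: "'b \<Rightarrow> 'a set" and f :: "'b \<Rightarrow> nat"
  assumes "finite B" "B \<noteq> {}"
    and "\<And>b. b \<in> B \<Longrightarrow> finite (U b)"
    and "\<And>b. b \<in> B \<Longrightarrow> 0 < f b \<and> f b \<le> card (U b)"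
    and "\<And>a b. a \<in> B \<Longrightarrow> b \<in> B \<Longrightarrow> a < b \<Longrightarrow> U a \<subseteq> U b \<and> f b \<le> 1 + card (U b - U a)"
  shows "(\<Sum>b\<in>B. f b - 1) < card (U (Max B))"
  using assms
proof (induction B rule: finite_linorder_max_induct)
  case empty
  then show ?case by simp
next
  case (insert b A)
  have f: "0 < f b" "f b \<le> card (U b)" using insert.prems(3) by auto
  show ?case
  proof (cases "A = {}")
    case True
    then show ?thesis using f by simp
  next
    case False
    let ?a = "Max A"
    have a: "?a \<in> A" "?a < b" using insert.hyps False by auto
    have IH: "(\<Sum>x\<in>A. f x - 1) < card (U ?a)"
      using insert.prems False by (intro insert.IH) auto
    have U: "U ?a \<subseteq> U b" "f b \<le> 1 + card (U b - U ?a)" using insert.prems(4) a by auto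
    have "finite (U b)" using insert.prems(2) by simp
    then have "card (U b - U ?a) = card (U b) - card (U ?a)" "card (U ?a) \<le> card (U b)"
      using U(1) by (auto simp: card_Diff_subset card_mono finite_subset)
    then have "f b - 1 + card (U ?a) \<le> card (U b)" using U(2) by linarith
    moreover have "Max (insert b A) = b" using insert.hyps False a(2) by (simp add: Max_insert)
    moreover have "b \<notin> A" using insert.hyps by auto
    ultimately show ?thesis using IH insert.hyps(1) by simp
  qed
qed

lemma sum_Betti_le_embdim:
  assumes ns: "numerical_semigroup S" and bs: "betti_sorted S"
  shows "(\<Sum>b\<in>Betti S. nc S b - 1) \<le> embdim S - 1"
proof (cases "Betti S = {}")
  case False
  have fin: "finite (min_gens S)" by (rule finite_min_gens[OF ns])
  have "(\<Sum>b\<in>Betti S. nc S b - 1) < card (used_gens S (Max (Betti S)))"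
  proof (rule sum_minus_1_less_card_chain[OF finite_Betti[OF ns] False])
    fix b assume b: "b \<in> Betti S"
    show "finite (used_gens S b)" using finite_subset[OF used_gens_subset fin] .
    show "0 < nc S b \<and> nc S b \<le> card (used_gens S b)"
      using b nc_le_card_used_gens[OF fin Betti_pos[OF fin b]] by (simp add: Betti_def)
  next
    fix a b assume ab: "a \<in> Betti S" "b \<in> Betti S" "a < b"
    then have "le_S S a b \<or> le_S S b a" using bs by (simp add: betti_sorted_def)
    then have "b - a \<in> S" using ab(3) by (auto simp: le_S_def)
    moreover have "Z S a \<noteq> {}" using ab(1) Z_nonempty[OF ns] by (simp add: Betti_def)
    ultimately show "used_gens S a \<subseteq> used_gens S b \<and> nc S b \<le> 1 + card (used_gens S b - used_gens S a)"
      using used_gens_mono[OF ns] nc_le_Suc_card_new_gens[OF ns _ ab(3)] ab(3) by simp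
  qed
  moreover have "card (used_gens S (Max (Betti S))) \<le> embdim S"
    unfolding embdim_def by (rule card_mono[OF fin used_gens_subset])
  ultimately show ?thesis by linarith
qed simp

section \<open>A lower bound from linear algebra\<close>

interpretation rat_fun: vector_space "\<lambda>(c::rat) (f::nat \<Rightarrow> rat). (\<lambda>n. c * f n)"
  by unfold_locales (simp_all add: fun_eq_iff algebra_simps)

definition pair_diff :: "(nat \<Rightarrow> nat) \<times> (nat \<Rightarrow> nat) \<Rightarrow> nat \<Rightarrow> rat" where
  "pair_diff p = (\<lambda>n. of_nat (fst p n) - of_nat (snd p n))"

lemma cong_gen_pair_diff_in_span:
  "p \<in> cong_gen S \<rho> \<Longrightarrow> pair_diff p \<in> rat_fun.span (pair_diff ` \<rho>)"
proof (induction rule: cong_gen.induct)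
  case (base p)
  then show ?case by (intro rat_fun.span_base) blast
next
  case (refl a)
  have "pair_diff (a, a) = 0" by (simp add: pair_diff_def fun_eq_iff)
  then show ?case by (simp only: fst_conv snd_conv rat_fun.span_zero)
next
  case (sym a b)
  have "pair_diff (b, a) = - pair_diff (a, b)" by (simp add: pair_diff_def fun_eq_iff)
  show ?case unfolding \<open>pair_diff (b, a) = - pair_diff (a, b)\<close> by (rule rat_fun.span_neg[OF sym.IH])
next
  case (trans a b c)
  have "pair_diff (a, c) = pair_diff (a, b) + pair_diff (b, c)" by (simp add: pair_diff_def fun_eq_iff)
  then show ?case by (simp only: rat_fun.span_add[OF trans.IH])
next
  case (add a b c)
  have "pair_diff (\<lambda>n. a n + c n, \<lambda>n. b n + c n) = pair_diff (a, b)" by (simp add: pair_diff_def fun_eq_iff)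
  then show ?case using add.IH by simp
qed

lemma sum_fun_apply: "(\<Sum>x\<in>A. f x) n = (\<Sum>x\<in>A. f x n)"
  by (induction A rule: infinite_finite_induct) auto

lemma independent_if_diagonal:
  fixes v :: "nat \<Rightarrow> nat \<Rightarrow> rat"
  assumes diag: "\<And>m m'. m \<in> M \<Longrightarrow> m' \<in> M \<Longrightarrow> v m m' \<noteq> 0 \<longleftrightarrow> m = m'"
  shows "inj_on v M" and "rat_fun.independent (v ` M)"
proof -
  show "inj_on v M" by (rule inj_onI) (metis diag)
  show "rat_fun.independent (v ` M)"
  proof
    assume "rat_fun.dependent (v ` M)"
    then obtain T u w where T: "finite T" "T \<subseteq> v ` M" and sum: "(\<Sum>x\<in>T. (\<lambda>n. u x * x n)) = 0"
      and w: "w \<in> T" "u w \<noteq> 0"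
      unfolding rat_fun.dependent_explicit by blast
    obtain m where m: "m \<in> M" "w = v m" using T w by blast
    have zero: "x m = 0" if "x \<in> T" "x \<noteq> w" for x
      using that T m diag by blast
    have "(\<Sum>x\<in>T - {w}. u x * x m) = 0" by (intro sum.neutral ballI) (simp add: zero)
    then have "(\<Sum>x\<in>T. u x * x m) = u w * w m" using T(1) w(1) by (simp add: sum.remove)
    moreover have "(\<Sum>x\<in>T. u x * x m) = 0"
      using fun_cong[OF sum, of m] by (simp add: sum_fun_apply)
    ultimately show False using w(2) diag[OF m(1) m(1)] m(2) by simp
  qed
qed

lemma embdim_le_card_presentation:
  assumes fin: "finite (min_gens S)" and pres: "cong_gen S \<rho> = kernel_cong S" and "finite \<rho>"
  shows "embdim S - 1 \<le> card \<rho>"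
proof (cases "min_gens S = {}")
  case False
  then obtain n0 where n0: "n0 \<in> min_gens S" by blast
  then have "0 < n0" by (simp add: min_gens_def)
  define M where "M = min_gens S - {n0}"
  define v where "v m = pair_diff (single_fact m n0, single_fact n0 m)" for m
  have "v m m' \<noteq> 0 \<longleftrightarrow> m = m'" if "m \<in> M" "m' \<in> M" for m m'
    using that \<open>0 < n0\<close> by (auto simp: v_def pair_diff_def single_fact_def M_def)
  note indep = independent_if_diagonal[of M v, OF this]
  have "v ` M \<subseteq> rat_fun.span (pair_diff ` \<rho>)"
  proof
    fix x assume "x \<in> v ` M"
    then obtain m where m: "m \<in> min_gens S" "x = v m" by (auto simp: M_def)
    have "(single_fact m n0, single_fact n0 m) \<in> kernel_cong S"
      using m n0 by (simp add: kernel_cong_def single_fact_in_facts phi_single_fact[OF fin])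
    then show "x \<in> rat_fun.span (pair_diff ` \<rho>)"
      using cong_gen_pair_diff_in_span m(2) pres unfolding v_def by fastforce
  qed
  then have "card (v ` M) \<le> card (pair_diff ` \<rho>)"
    using rat_fun.independent_span_bound[OF _ indep(2)] \<open>finite \<rho>\<close> by blast
  also have "\<dots> \<le> card \<rho>" by (rule card_image_le[OF \<open>finite \<rho>\<close>])
  finally show ?thesis
    using card_image[OF indep(1)] fin n0 by (simp add: M_def embdim_def)
qed (simp add: embdim_def)

theorem corollary6p3:
  assumes "numerical_semigroup S"
    and "betti_sorted S"
  shows "complete_intersection S"
  unfolding complete_intersection_def
proof (intro allI impI)
  fix \<rho> assume mp: "minimal_presentation S \<rho>"
  have "finite \<rho>" by (rule minimal_presentation_card_le(1)[OF assms(1) mp])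
  moreover have "card \<rho> \<le> embdim S - 1"
    using minimal_presentation_card_le(2)[OF assms(1) mp] sum_Betti_le_embdim[OF assms] by linarith
  moreover have "embdim S - 1 \<le> card \<rho>"
    using embdim_le_card_presentation[OF finite_min_gens[OF assms(1)] _ \<open>finite \<rho>\<close>] mp
    by (simp add: minimal_presentation_def)
  ultimately show "finite \<rho> \<and> card \<rho> = embdim S - 1" by simp
qed

end
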